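(* For all positive integers $k,t$, with $\mathcal{W}$ the weight partition of $\mathbb{F}_q^k$, $$\frac{2q}{(k+1)^2(q-1)-a(q-a)}\,S_{k,t}\;\le\; r_{\mathcal{W}}(k,t)\;\le\; N_q\big(\min(2t+1,k+1),\,2t\big),$$ where $a=(k+1)\bmod q$ and $$S_{k,t}=\begin{cases}\dfrac{k(k+1)(6t+1-k)}{6}, & k\le 2t,\\[4pt] \dfrac{t(2t+1)(3k-2t+1)}{3}, & k\ge 2t.\end{cases}$$
   Context: $\mathcal{W}=\{W_0,\ldots,W_k\}$ with $W_i=\{u\in\mathbb{F}_q^k:\mathrm{wt}(u)=i\}$ (Hamming weight). A $(\mathcal{P},t)$-encoding with redundancy $r$ is a systematic map $\mathcal{C}:\mathbb{F}_q^k\to\mathbb{F}_q^{k+r}$, $\mathcal{C}(u)=(u,p(u))$, with Hamming distance $d(\mathcal{C}(u),\mathcal{C}(v))\ge 2t+1$ whenever $u,v$ lie in different blocks of $\mathcal{P}$; $r_{\mathcal{P}}(k,t)$ is the minimum such $r$. $N_q(M,d)$ denotes the minimum length of a $q$-ary code with $M$ codewords and minimum Hamming distance $d$. *)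

theory Defs
  imports Complex_Main "HOL-Library.Cardinality"
begin

text \<open>Vectors of F_q^k are represented as lists of length k over a finite field 'a.\<close>

definition hamming_dist :: "'a list \<Rightarrow> 'a list \<Rightarrow> nat" where
  "hamming_dist u v = card {i. i < length u \<and> u ! i \<noteq> v ! i}"

definition hamming_wt :: "'a::zero list \<Rightarrow> nat" where
  "hamming_wt u = length (filter (\<lambda>x. x \<noteq> 0) u)"

definition weight_partition :: "nat \<Rightarrow> 'a::zero list set set" where
  "weight_partition k = {{u. length u = k \<and> hamming_wt u = i} | i. i \<le> k}"

text \<open>A (P,t)-encoding with redundancy r: systematic map u \<mapsto> (u, p u), p u of length r.\<close>
definition is_PT_encoding ::
  "'a list set set \<Rightarrow> nat \<Rightarrow> nat \<Rightarrow> nat \<Rightarrow> ('a list \<Rightarrow> 'a list) \<Rightarrow> bool" where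
  "is_PT_encoding P k t r p \<longleftrightarrow>
     (\<forall>u. length u = k \<longrightarrow> length (p u) = r) \<and>
     (\<forall>u v. length u = k \<and> length v = k \<and> \<not> (\<exists>B\<in>P. u \<in> B \<and> v \<in> B) \<longrightarrow>
        2 * t + 1 \<le> hamming_dist (u @ p u) (v @ p v))"

definition r_P :: "'a list set set \<Rightarrow> nat \<Rightarrow> nat \<Rightarrow> nat" where
  "r_P P k t = (LEAST r. \<exists>p. is_PT_encoding P k t r p)"

definition N_q :: "'a itself \<Rightarrow> nat \<Rightarrow> nat \<Rightarrow> nat" where
  "N_q _ M d = (LEAST n. \<exists>C :: 'a list set. C \<subseteq> {u. length u = n} \<and> card C = M \<and>
       (\<forall>x\<in>C. \<forall>y\<in>C. x \<noteq> y \<longrightarrow> d \<le> hamming_dist x y))"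

definition S_kt :: "nat \<Rightarrow> nat \<Rightarrow> real" where
  "S_kt k t = (if k \<le> 2 * t
     then real k * (real k + 1) * (6 * real t + 1 - real k) / 6
     else real t * (2 * real t + 1) * (3 * real k - 2 * real t + 1) / 3)"

end

theory Submission
  imports Defs
begin

text \<open>
  Lower bound: the staircase vectors u_i = 1^i 0^(k-i), 0 <= i <= k, lie in distinct weight
  classes and d(u_i, u_j) = |i - j|, so the parities must satisfy
  d(p u_i, p u_j) >= 2t + 1 - |i - j|; summed over all ordered pairs this is 2 S_(k,t).
  In each of the r parity coordinates, the number of ordered pairs (i, j) with different
  entries is at most ((k+1)^2 (q-1) - a(q-a)) / q, the value for the most balanced colouring
  of k + 1 points with q colours.

  Upper bound: given a code of M = min(2t+1, k+1) words with distance 2t, let the parity of u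
  be the codeword indexed by wt(u) mod M. Two vectors of different weights with the same index
  have weights differing by at least M, which forces M = 2t + 1.
\<close>

lemma of_nat_hamming_dist:
  "of_nat (hamming_dist u v) = (\<Sum>i<length u. of_bool (u ! i \<noteq> v ! i) :: 'b::semiring_1)"
  unfolding hamming_dist_def by (simp add: sum_of_bool_eq Int_def lessThan_def conj_commute)

lemma hamming_dist_self [simp]: "hamming_dist u u = 0"
  by (simp add: hamming_dist_def)

lemma hamming_dist_commute: "length u = length v \<Longrightarrow> hamming_dist u v = hamming_dist v u"
  unfolding hamming_dist_def by metis

lemma hamming_dist_Nil [simp]: "hamming_dist [] v = 0"
  by (simp add: hamming_dist_def)

lemma hamming_dist_Cons [simp]:
  "hamming_dist (a # u) (b # v) = of_bool (a \<noteq> b) + hamming_dist u v"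
proof -
  have "real (hamming_dist (a # u) (b # v)) = of_bool (a \<noteq> b) + real (hamming_dist u v)"
    unfolding of_nat_hamming_dist
    by (simp only: length_Cons sum.lessThan_Suc_shift nth_Cons_0 nth_Cons_Suc)
  then show ?thesis
    by (metis of_nat_add of_nat_eq_iff of_nat_of_bool)
qed

lemma hamming_dist_append:
  "length u = length v \<Longrightarrow> hamming_dist (u @ x) (v @ y) = hamming_dist u v + hamming_dist x y"
  by (induction u v rule: list_induct2) simp_all

lemma hamming_wt_le_length: "hamming_wt u \<le> length u"
  unfolding hamming_wt_def by simp

lemma hamming_wt_Cons [simp]: "hamming_wt (a # u) = of_bool (a \<noteq> 0) + hamming_wt u"
  by (simp add: hamming_wt_def)

lemma hamming_wt_le_add_dist:
  "length u = length v \<Longrightarrow> hamming_wt u \<le> hamming_wt v + hamming_dist u v"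
proof (induction u v rule: list_induct2)
  case Nil
  then show ?case by (simp add: hamming_wt_def)
next
  case (Cons a u b v)
  then show ?case by (cases "a = b"; cases "a = 0"; simp)
qed

lemma same_weight_block_iff:
  assumes "length u = k" and "length v = k"
  shows "(\<exists>B\<in>weight_partition k. u \<in> B \<and> v \<in> B) \<longleftrightarrow> hamming_wt u = hamming_wt v"
proof
  assume "\<exists>B\<in>weight_partition k. u \<in> B \<and> v \<in> B"
  then show "hamming_wt u = hamming_wt v" by (auto simp: weight_partition_def)
next
  assume "hamming_wt u = hamming_wt v"
  then show "\<exists>B\<in>weight_partition k. u \<in> B \<and> v \<in> B"
    using assms hamming_wt_le_length[of u] unfolding weight_partition_def
    by (intro bexI[of _ "{w. length w = k \<and> hamming_wt w = hamming_wt u}"]) auto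
qed

definition staircase :: "nat \<Rightarrow> nat \<Rightarrow> 'a::zero_neq_one list" where
  "staircase n i = map (\<lambda>c. of_bool (c < i)) [0..<n]"

lemma length_staircase [simp]: "length (staircase n i) = n"
  by (simp add: staircase_def)

lemma hamming_wt_staircase: "i \<le> n \<Longrightarrow> hamming_wt (staircase n i) = i"
proof -
  assume "i \<le> n"
  then have "{c. c < n \<and> (staircase n i :: 'a list) ! c \<noteq> 0} = {..<i}"
    by (auto simp: staircase_def)
  then show ?thesis
    unfolding hamming_wt_def length_filter_conv_card length_staircase by simp
qed

lemma hamming_dist_staircase:
  assumes "i \<le> n" and "j \<le> n"
  shows "hamming_dist (staircase n i :: 'a::zero_neq_one list) (staircase n j) = max i j - min i j"
proof -
  have "{c. c < n \<and> (staircase n i :: 'a list) ! c \<noteq> staircase n j ! c} = {min i j..<max i j}"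
    using assms by (auto simp: staircase_def of_bool_eq_iff min_def max_def)
  then show ?thesis by (simp add: hamming_dist_def)
qed

lemma sum_squares_ge_balanced:
  fixes n :: "'b \<Rightarrow> nat"
  assumes "finite A"
  shows "real (sum n A) ^ 2 + real (sum n A mod card A * (card A - sum n A mod card A))
           \<le> real (card A) * (\<Sum>s\<in>A. real (n s) ^ 2)"
proof (cases "A = {}")
  case False
  define N q where "N = sum n A" and "q = card A"
  define m a where "m = N div q" and "a = N mod q"
  have "0 < q" using assms False by (simp add: q_def card_gt_0_iff)
  then have "a < q" by (simp add: a_def)
  have N_eq: "real N = real q * real m + real a"
    by (metis a_def m_def div_mult_mod_eq of_nat_add of_nat_mult mult.commute)
  have "(real (n s) - real m) * (real (n s) - real m - 1) \<ge> 0" for s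
    by (cases "n s \<le> m") (auto intro: mult_nonpos_nonpos mult_nonneg_nonneg)
  then have "0 \<le> (\<Sum>s\<in>A. (real (n s) - real m) * (real (n s) - real m - 1))"
    by (intro sum_nonneg)
  also have "\<dots> = (\<Sum>s\<in>A. real (n s) ^ 2) - (2 * real m + 1) * real N + real q * real m * (real m + 1)"
    by (simp add: N_def q_def algebra_simps power2_eq_square sum.distrib sum_subtractf
        sum_distrib_left)
  finally have "real q * ((2 * real m + 1) * real N - real q * real m * (real m + 1))
      \<le> real q * (\<Sum>s\<in>A. real (n s) ^ 2)"
    by (intro mult_left_mono) auto
  moreover have "real q * ((2 * real m + 1) * real N - real q * real m * (real m + 1))
      = real N ^ 2 + real a * (real q - real a)"
    unfolding N_eq by (simp add: algebra_simps power2_eq_square)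
  ultimately show ?thesis
    using \<open>a < q\<close> by (simp add: N_def q_def a_def of_nat_diff)
qed simp

lemma sum_distinct_pairs_le:
  fixes f :: "'b \<Rightarrow> 'a::finite"
  assumes "finite I"
  shows "real CARD('a) * (\<Sum>i\<in>I. \<Sum>j\<in>I. of_bool (f i \<noteq> f j))
           \<le> real (card I ^ 2 * (CARD('a) - 1))
              - real (card I mod CARD('a) * (CARD('a) - card I mod CARD('a)))"
proof -
  define n where "n s = card {i\<in>I. f i = s}" for s
  have fibre: "real (n s) = (\<Sum>i\<in>I. of_bool (f i = s))" for s
    using assms by (simp add: n_def Int_def conj_commute)
  have "real (sum n UNIV) = (\<Sum>i\<in>I. \<Sum>s\<in>UNIV. of_bool (f i = s))"
    unfolding of_nat_sum fibre by (rule sum.swap)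
  also have "\<dots> = real (card I)"
    by simp
  finally have sum_n: "sum n UNIV = card I"
    by linarith
  have "(\<Sum>s\<in>UNIV. real (n s) ^ 2)
        = (\<Sum>s\<in>UNIV. \<Sum>i\<in>I. \<Sum>j\<in>I. of_bool (f i = s) * of_bool (f j = s))"
    unfolding fibre power2_eq_square sum_product ..
  also have "\<dots> = (\<Sum>i\<in>I. \<Sum>j\<in>I. \<Sum>s\<in>UNIV. of_bool (f i = s) * of_bool (f j = s))"
    by (rule trans[OF sum.swap], rule sum.cong[OF refl], rule sum.swap)
  also have "\<dots> = (\<Sum>i\<in>I. \<Sum>j\<in>I. of_bool (f i = f j))"
  proof (intro sum.cong refl)
    fix i j
    have "{s. f i = s \<and> f j = s} = (if f i = f j then {f i} else {})"
      by auto
    then show "(\<Sum>s\<in>UNIV. of_bool (f i = s) * of_bool (f j = s) :: real) = of_bool (f i = f j)"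
      by (simp add: of_bool_conj[symmetric])
  qed
  also have "\<dots> = real (card I) ^ 2 - (\<Sum>i\<in>I. \<Sum>j\<in>I. of_bool (f i \<noteq> f j))"
    by (simp add: of_bool_not_iff sum_subtractf power2_eq_square)
  finally have squares: "(\<Sum>s\<in>UNIV. real (n s) ^ 2)
      = real (card I) ^ 2 - (\<Sum>i\<in>I. \<Sum>j\<in>I. of_bool (f i \<noteq> f j))" .
  have "CARD('a) \<ge> 1" and "card I mod CARD('a) \<le> CARD('a)"
    by (simp_all add: Suc_leI)
  then show ?thesis
    using sum_squares_ge_balanced[of UNIV n] unfolding squares sum_n
    by (simp add: of_nat_diff algebra_simps)
qed

text \<open>The distance an encoding must put between the parities of the staircase vectors u_i, u_j.\<close>

definition parity_demand :: "nat \<Rightarrow> nat \<Rightarrow> nat \<Rightarrow> nat" where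
  "parity_demand t i j = (if i = j then 0 else 2 * t + 1 - (max i j - min i j))"

lemma sum_parity_demand_column: "(\<Sum>i<n. parity_demand t i n) = (\<Sum>d<n. 2 * t - d)"
proof -
  have "(\<Sum>i<n. parity_demand t i n) = (\<Sum>i<n. 2 * t - (n - Suc i))"
    by (intro sum.cong) (auto simp: parity_demand_def)
  also have "\<dots> = (\<Sum>d<n. 2 * t - d)"
    by (rule sum.nat_diff_reindex)
  finally show ?thesis .
qed

lemma sum_lessThan_diff_closed_form:
  "real (\<Sum>d<n. m - d)
     = (if n \<le> m then real n * real m - real n * (real n - 1) / 2 else real m * (real m + 1) / 2)"
proof (induction n)
  case (Suc n)
  then show ?case
    by (cases "Suc n \<le> m"; cases "n = m") (auto simp: of_nat_diff field_simps)
qed simp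

lemma S_kt_Suc: "S_kt (Suc k) t = S_kt k t + real (\<Sum>d<Suc k. 2 * t - d)"
  unfolding sum_lessThan_diff_closed_form S_kt_def
  by (cases "Suc k \<le> 2 * t"; cases "k = 2 * t") (auto simp: field_simps)

lemma sum_parity_demand:
  "real (\<Sum>i<Suc k. \<Sum>j<Suc k. parity_demand t i j) = 2 * S_kt k t"
proof (induction k)
  case 0
  then show ?case by (simp add: parity_demand_def S_kt_def)
next
  case (Suc k)
  have "(\<Sum>i<Suc (Suc k). \<Sum>j<Suc (Suc k). parity_demand t i j)
      = (\<Sum>i<Suc k. \<Sum>j<Suc k. parity_demand t i j) + (\<Sum>i<Suc k. parity_demand t i (Suc k))
        + (\<Sum>j<Suc k. parity_demand t (Suc k) j) + parity_demand t (Suc k) (Suc k)"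
    by (simp add: sum.distrib)
  also have "\<dots> = (\<Sum>i<Suc k. \<Sum>j<Suc k. parity_demand t i j) + 2 * (\<Sum>d<Suc k. 2 * t - d)"
    by (simp only: sum_parity_demand_column[symmetric])
      (simp add: parity_demand_def max.commute min.commute)
  finally show ?case
    by (simp only: of_nat_add of_nat_mult of_nat_numeral Suc.IH S_kt_Suc distrib_left)
qed

lemma two_le_card_zero_neq_one: "2 \<le> CARD('a::{finite,zero_neq_one})"
proof -
  have "card {0, 1 :: 'a} \<le> CARD('a)"
    by (rule card_mono) simp_all
  then show ?thesis by simp
qed

lemma mod_mult_diff_less_square:
  fixes N q :: nat
  assumes "2 \<le> q" and "2 \<le> N"
  shows "N mod q * (q - N mod q) < N ^ 2 * (q - 1)"
proof (cases "N mod q = 0")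
  case False
  have "N mod q * (q - N mod q) \<le> N * (q - 1)"
    using False by (intro mult_le_mono) auto
  also have "\<dots> < N ^ 2 * (q - 1)"
    using assms by (simp add: power2_eq_square)
  finally show ?thesis .
qed (use assms in simp)

lemma parity_demand_le_hamming_dist:
  fixes p :: "'a::zero_neq_one list \<Rightarrow> 'a list"
  assumes enc: "is_PT_encoding (weight_partition k) k t r p" and "i \<le> k" and "j \<le> k"
  shows "parity_demand t i j \<le> hamming_dist (p (staircase k i)) (p (staircase k j))"
proof (cases "i = j")
  case False
  have "\<not> (\<exists>B\<in>weight_partition k. staircase k i \<in> B \<and> (staircase k j :: 'a list) \<in> B)"
    using False assms by (simp add: same_weight_block_iff hamming_wt_staircase)
  then have "2 * t + 1
      \<le> hamming_dist (staircase k i @ p (staircase k i)) (staircase k j @ p (staircase k j))"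
    using enc by (simp add: is_PT_encoding_def)
  also have "\<dots> = max i j - min i j + hamming_dist (p (staircase k i)) (p (staircase k j))"
    using assms by (simp add: hamming_dist_append hamming_dist_staircase is_PT_encoding_def)
  finally show ?thesis
    using False by (simp add: parity_demand_def)
qed (simp add: parity_demand_def)

lemma weight_partition_encoding_redundancy_ge:
  fixes p :: "'a::{finite,zero_neq_one} list \<Rightarrow> 'a list"
  assumes enc: "is_PT_encoding (weight_partition k) k t r p"
  shows "2 * real CARD('a) * S_kt k t
    \<le> real r * (real ((k + 1) ^ 2 * (CARD('a) - 1))
                 - real ((k + 1) mod CARD('a) * (CARD('a) - (k + 1) mod CARD('a))))"
    (is "_ \<le> real r * ?D")
proof -
  define x where "x i = p (staircase k i)" for i
  have len: "length (x i) = r" for i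
    using enc by (simp add: is_PT_encoding_def x_def)
  have column: "real CARD('a) * (\<Sum>i<Suc k. \<Sum>j<Suc k. of_bool (x i ! c \<noteq> x j ! c)) \<le> ?D" for c
    using sum_distinct_pairs_le[of "{..<Suc k}" "\<lambda>i. x i ! c"] by simp
  have "2 * S_kt k t = real (\<Sum>i<Suc k. \<Sum>j<Suc k. parity_demand t i j)"
    by (rule sum_parity_demand[symmetric])
  also have "\<dots> \<le> (\<Sum>i<Suc k. \<Sum>j<Suc k. real (hamming_dist (x i) (x j)))"
    unfolding of_nat_sum x_def by (intro sum_mono) (simp add: parity_demand_le_hamming_dist[OF enc])
  also have "\<dots> = (\<Sum>c<r. \<Sum>i<Suc k. \<Sum>j<Suc k. of_bool (x i ! c \<noteq> x j ! c))"
    unfolding of_nat_hamming_dist len by (rule trans[OF sum.cong[OF refl sum.swap] sum.swap])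
  finally have "real CARD('a) * (2 * S_kt k t)
      \<le> (\<Sum>c<r. real CARD('a) * (\<Sum>i<Suc k. \<Sum>j<Suc k. of_bool (x i ! c \<noteq> x j ! c)))"
    unfolding sum_distrib_left[symmetric] by (rule mult_left_mono) simp
  also have "\<dots> \<le> (\<Sum>c<r. ?D)"
    by (intro sum_mono column)
  finally show ?thesis
    by (simp add: mult_ac)
qed

lemma ex_code_min_dist:
  "\<exists>n (C :: 'a::zero_neq_one list set). C \<subseteq> {u. length u = n} \<and> card C = M \<and>
     (\<forall>x\<in>C. \<forall>y\<in>C. x \<noteq> y \<longrightarrow> d \<le> hamming_dist x y)"
proof -
  define n where "n = (d + 1) * M"
  define c where "c i = (staircase n ((d + 1) * i) :: 'a list)" for i
  have bound: "(d + 1) * i \<le> n" if "i < M" for i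
    using that unfolding n_def by (intro mult_le_mono2) simp
  have dist: "hamming_dist (c i) (c j) = (d + 1) * (max i j - min i j)" if "i < M" "j < M" for i j
  proof -
    have "hamming_dist (c i) (c j) = max ((d + 1) * i) ((d + 1) * j) - min ((d + 1) * i) ((d + 1) * j)"
      using bound[OF that(1)] bound[OF that(2)] by (simp only: c_def hamming_dist_staircase)
    then show ?thesis
      by (simp only: nat_mult_max_right[symmetric] nat_mult_min_right[symmetric] diff_mult_distrib2)
  qed
  have separated: "d < hamming_dist (c i) (c j)" if "i < M" "j < M" "i \<noteq> j" for i j
  proof -
    have "1 \<le> max i j - min i j"
      using that(3) by (auto simp: max_def min_def)
    then have "(d + 1) * 1 \<le> (d + 1) * (max i j - min i j)"
      by (rule mult_le_mono2)
    then show ?thesis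
      using dist[OF that(1,2)] by simp
  qed
  then have "inj_on c {..<M}"
    by (metis hamming_dist_self inj_onI lessThan_iff not_less0)
  then have "card (c ` {..<M}) = M"
    by (simp add: card_image)
  moreover have "d \<le> hamming_dist x y" if "x \<in> c ` {..<M}" "y \<in> c ` {..<M}" "x \<noteq> y" for x y
    using that separated by (auto intro: less_imp_le)
  ultimately show ?thesis
    by (intro exI[of _ n] exI[of _ "c ` {..<M}"]) (auto simp: c_def)
qed

lemma mod_eq_imp_le_diff:
  fixes a b M :: nat
  assumes "a mod M = b mod M" and "a < b"
  shows "M \<le> b - a"
proof -
  have "M dvd b - a"
    using assms mod_eq_dvd_iff_nat[of a b M] by simp
  then show ?thesis
    using assms(2) by (simp add: dvd_imp_le)
qed

lemma weight_partition_encoding_of_code: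
  fixes C :: "'a::zero list set"
  assumes length_C: "C \<subseteq> {u. length u = n}" and card_C: "card C = min (2 * t + 1) (k + 1)"
    and dist_C: "\<forall>x\<in>C. \<forall>y\<in>C. x \<noteq> y \<longrightarrow> 2 * t \<le> hamming_dist x y"
  shows "\<exists>p. is_PT_encoding (weight_partition k :: 'a list set set) k t n p"
proof -
  define M where "M = card C"
  have "0 < M" and "finite C"
    using card_C by (simp_all add: M_def card_ge_0_finite)
  then obtain g where g: "bij_betw g {0..<M} C"
    using ex_bij_betw_nat_finite M_def by blast
  define p where "p u = g (hamming_wt u mod M)" for u :: "'a list"
  have p_C: "p u \<in> C" for u
    using g \<open>0 < M\<close> by (auto simp: p_def bij_betw_def)
  have separation: "2 * t + 1 \<le> hamming_dist (u @ p u) (v @ p v)"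
    if "length u = k" "length v = k" "hamming_wt u \<noteq> hamming_wt v" for u v
  proof -
    have weights: "hamming_wt u \<le> hamming_wt v + hamming_dist u v"
        "hamming_wt v \<le> hamming_wt u + hamming_dist u v" "hamming_wt u \<le> k" "hamming_wt v \<le> k"
      using that hamming_wt_le_add_dist[of u v] hamming_wt_le_add_dist[of v u]
        hamming_dist_commute[of u v] hamming_wt_le_length[of u] hamming_wt_le_length[of v]
      by simp_all
    have split: "hamming_dist (u @ p u) (v @ p v) = hamming_dist u v + hamming_dist (p u) (p v)"
      using that p_C length_C by (simp add: hamming_dist_append subset_iff)
    show ?thesis
    proof (cases "hamming_wt u mod M = hamming_wt v mod M")
      case True
      then have far: "M \<le> hamming_wt v - hamming_wt u \<or> M \<le> hamming_wt u - hamming_wt v"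
        using that(3) mod_eq_imp_le_diff by (metis linorder_neqE_nat)
      then have "M \<le> k"
        using weights by linarith
      then have "M = 2 * t + 1"
        using card_C M_def by (simp add: min_def split: if_splits)
      moreover have "M \<le> hamming_dist u v"
        using far weights by linarith
      ultimately show ?thesis
        using split by simp
    next
      case False
      moreover have "hamming_wt u mod M \<in> {0..<M}" "hamming_wt v mod M \<in> {0..<M}"
        using \<open>0 < M\<close> by simp_all
      ultimately have "p u \<noteq> p v"
        unfolding p_def using bij_betw_imp_inj_on[OF g] by (metis inj_on_eq_iff)
      then have "2 * t \<le> hamming_dist (p u) (p v)"
        using dist_C p_C by blast
      moreover have "1 \<le> hamming_dist u v"
        using weights that(3) by linarith
      ultimately show ?thesis
        using split by simp
    qed
  qed
  have "is_PT_encoding (weight_partition k :: 'a list set set) k t n p"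
    unfolding is_PT_encoding_def
  proof (intro conjI allI impI)
    show "length (p u) = n" for u
      using p_C[of u] length_C by auto
    show "2 * t + 1 \<le> hamming_dist (u @ p u) (v @ p v)"
      if "length u = k \<and> length v = k \<and> \<not> (\<exists>B\<in>weight_partition k. u \<in> B \<and> v \<in> B)" for u v
    proof -
      have "hamming_wt u \<noteq> hamming_wt v"
        using that same_weight_block_iff[of u k v] by blast
      then show ?thesis
        using that separation by simp
    qed
  qed
  then show ?thesis by blast
qed

lemma r_P_le:
  "is_PT_encoding P k t r p \<Longrightarrow> r_P P k t \<le> r"
  unfolding r_P_def by (blast intro: Least_le)

lemma r_P_attained:
  "is_PT_encoding P k t r p \<Longrightarrow> \<exists>p. is_PT_encoding P k t (r_P P k t) p"
  unfolding r_P_def by (rule LeastI) blast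

lemma weight_partition_encoding_N_q:
  "\<exists>p. is_PT_encoding (weight_partition k :: 'a::zero_neq_one list set set) k t
         (N_q TYPE('a) (min (2 * t + 1) (k + 1)) (2 * t)) p"
proof -
  obtain C :: "'a list set" where "C \<subseteq> {u. length u = N_q TYPE('a) (min (2 * t + 1) (k + 1)) (2 * t)}"
    and "card C = min (2 * t + 1) (k + 1)" and "\<forall>x\<in>C. \<forall>y\<in>C. x \<noteq> y \<longrightarrow> 2 * t \<le> hamming_dist x y"
    using LeastI_ex[OF ex_code_min_dist[where 'a = 'a and M = "min (2 * t + 1) (k + 1)" and d = "2 * t"]]
    unfolding N_q_def by blast
  then show ?thesis
    by (rule weight_partition_encoding_of_code)
qed

theorem corollary5:
  fixes k t :: nat
  assumes "0 < k" and "0 < t"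
  shows "2 * real CARD('a) /
           (real ((k + 1)^2 * (CARD('a) - 1))
             - real (((k + 1) mod CARD('a)) * (CARD('a) - (k + 1) mod CARD('a))))
           * S_kt k t
         \<le> real (r_P (weight_partition k :: 'a list set set) k t)
       \<and> r_P (weight_partition k :: 'a list set set) k t
         \<le> N_q TYPE('a::{finite,field}) (min (2 * t + 1) (k + 1)) (2 * t)"
proof
  let ?q = "CARD('a)" and ?a = "(k + 1) mod CARD('a)"
  let ?r = "r_P (weight_partition k :: 'a list set set) k t"
  obtain p where enc: "is_PT_encoding (weight_partition k :: 'a list set set) k t
      (N_q TYPE('a) (min (2 * t + 1) (k + 1)) (2 * t)) p"
    using weight_partition_encoding_N_q by blast
  then show "?r \<le> N_q TYPE('a) (min (2 * t + 1) (k + 1)) (2 * t)"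
    by (rule r_P_le)
  obtain p' where "is_PT_encoding (weight_partition k :: 'a list set set) k t ?r p'"
    using r_P_attained[OF enc] by blast
  then have lower:
    "2 * real ?q * S_kt k t \<le> real ?r * (real ((k + 1)^2 * (?q - 1)) - real (?a * (?q - ?a)))"
    by (rule weight_partition_encoding_redundancy_ge)
  have "?a * (?q - ?a) < (k + 1)^2 * (?q - 1)"
    using mod_mult_diff_less_square[OF two_le_card_zero_neq_one[where 'a = 'a]] assms(1) by simp
  then have "0 < real ((k + 1)^2 * (?q - 1)) - real (?a * (?q - ?a))"
    by (simp only: of_nat_less_iff diff_gt_0_iff_gt)
  with lower show
    "2 * real ?q / (real ((k + 1)^2 * (?q - 1)) - real (?a * (?q - ?a))) * S_kt k t \<le> real ?r"
    by (simp add: field_simps)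
qed

end
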